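(* Let $\mathbb{A}_1,\ldots,\mathbb{A}_n,\mathbb{B}$ be sized CPOs with sets of maximal elements $A_1,\ldots,A_n,B$ and size ordinals $\zeta_{\mathbb{A}_1},\ldots,\zeta_{\mathbb{A}_n},\zeta_{\mathbb{B}}$, and let $A=A_1\times\cdots\times A_n$. Let $h:A_1\times\cdots\times A_n\times B^m\to B$ and $g_i:A\to A$ ($i=1,\ldots,m$) with $g_i(x_1,\ldots,x_n)=\langle g_i^1(x_1,\ldots,x_n),\ldots,g_i^n(x_1,\ldots,x_n)\rangle$, where $g_i^j:A\to A_j$. Let $\eta_h$ be a production function for $h$ and $\eta_{i,j}$ a production function for $g_i^j$ ($i=1,\ldots,m$, $j=1,\ldots,n$). Assume that $\eta_h(\zeta_{\mathbb{A}_1},\ldots,\zeta_{\mathbb{A}_n},\beta_1,\ldots,\beta_m)>\min_{i=1,\ldots,m}\beta_i$ for all $\beta_1,\ldots,\beta_m\le\zeta_{\mathbb{B}}$ with $\beta_i<\zeta_{\mathbb{B}}$ for some $i$. If $f:A\to B$ is a function defined by corecursion from $h$ and $g_1,\ldots,g_m$, then there exists a production function $\eta_f$ for $f$ satisfying, for all $\bar\alpha\in\mathrm{On}(\zeta_{\mathbb{A}_1})\times\cdots\times\mathrm{On}(\zeta_{\mathbb{A}_n})$, $$\eta_f(\bar\alpha)=\eta_h\big(\bar\alpha,\ \eta_f(\eta_{1,1}(\bar\alpha),\ldots,\eta_{1,n}(\bar\alpha)),\ \ldots,\ \eta_f(\eta_{m,1}(\bar\alpha),\ldots,\eta_{m,n}(\bar\alpha))\big).$$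 Moreover, if $\eta_h$ and all $\eta_{i,j}$ are continuous, then so is $\eta_f$.
   Context: A CPO is a partial order with a least element in which every directed set has a supremum; a function between CPOs is continuous if it maps directed sets to directed sets and preserves their suprema; products of CPOs are ordered componentwise. For an ordinal $\zeta$, $\mathrm{On}(\zeta)$ is the set of ordinals $\le\zeta$ with the usual order. A sized CPO is a tuple $\langle\mathbb{A},\zeta,s,\mathtt{cut}\rangle$ where $\mathbb{A}$ is a CPO, $\zeta$ an ordinal (the size ordinal), $s:\mathbb{A}\to\mathrm{On}(\zeta)$ (size function) and $\mathtt{cut}:\mathrm{On}(\zeta)\times\mathbb{A}\to\mathbb{A}$, such that for $x\in\mathbb{A}$, $\alpha\le\zeta$: $s$ is surjective and continuous; $s(x)=\zeta$ iff $x$ is maximal in $\mathbb{A}$; $\mathtt{cut}$ is monotone in both arguments; $s(\mathtt{cut}(\alpha,x))=\alpha$ if $s(x)>\alpha$; $\mathtt{cut}(\alpha,x)=x$ if $s(x)\le\alpha$. A function between CPOs is regular if it is monotone and maps maximal elements to maximal elements. Given sized CPOs $\mathbb{A}_1,\ldots,\mathbb{A}_k,\mathbb{B}$ with sets of maximal elements $A_1,\ldots,A_k,B$, a production function for $f:A_1\times\cdots\times A_k\to B$ is any function $\eta:\mathrm{On}(\zeta_{\mathbb{A}_1})\times\cdots\times\mathrm{On}(\zeta_{\mathbb{A}_k})\to\mathrm{On}(\zeta_{\mathbb{B}})$ such that there is a regular $f^*:\mathbb{A}_1\times\cdots\times\mathbb{A}_k\to\mathbb{B}$ extending $f$ with $\eta(s(x_1),\ldots,s(x_k))=s(f^*(x_1,\ldots,x_k))$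 for all $x_i\in\mathbb{A}_i$. A function $f:S\to Q$ is defined by corecursion from $h:S\times Q^m\to Q$ and $g_i:S\to S$ if it is the unique function in $Q^S$ satisfying $f(x)=h(x,f(g_1(x)),\ldots,f(g_m(x)))$ for all $x\in S$. *)

theory Defs
  imports Main
begin

text \<open>Ordinals are modelled as elements of a well-ordered type 'o.\<close>

record ('a, 'o) scpo =
  car  :: "'a set"
  le   :: "'a \<Rightarrow> 'a \<Rightarrow> bool"
  zeta :: 'o
  sz   :: "'a \<Rightarrow> 'o"
  cut  :: "'o \<Rightarrow> 'a \<Rightarrow> 'a"

definition is_partial_order :: "'a set \<Rightarrow> ('a \<Rightarrow> 'a \<Rightarrow> bool) \<Rightarrow> bool" where
  "is_partial_order C r \<longleftrightarrow>
     (\<forall>x\<in>C. r x x) \<and>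
     (\<forall>x\<in>C. \<forall>y\<in>C. r x y \<and> r y x \<longrightarrow> x = y) \<and>
     (\<forall>x\<in>C. \<forall>y\<in>C. \<forall>z\<in>C. r x y \<and> r y z \<longrightarrow> r x z)"

definition directed :: "'a set \<Rightarrow> ('a \<Rightarrow> 'a \<Rightarrow> bool) \<Rightarrow> 'a set \<Rightarrow> bool" where
  "directed C r D \<longleftrightarrow> D \<subseteq> C \<and> D \<noteq> {} \<and> (\<forall>x\<in>D. \<forall>y\<in>D. \<exists>z\<in>D. r x z \<and> r y z)"

definition is_lub :: "'a set \<Rightarrow> ('a \<Rightarrow> 'a \<Rightarrow> bool) \<Rightarrow> 'a set \<Rightarrow> 'a \<Rightarrow> bool" where
  "is_lub C r D u \<longleftrightarrow> u \<in> C \<and> (\<forall>x\<in>D. r x u) \<and> (\<forall>v\<in>C. (\<forall>x\<in>D. r x v) \<longrightarrow> r u v)"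

definition is_cpo :: "'a set \<Rightarrow> ('a \<Rightarrow> 'a \<Rightarrow> bool) \<Rightarrow> bool" where
  "is_cpo C r \<longleftrightarrow> is_partial_order C r \<and> (\<exists>b\<in>C. \<forall>x\<in>C. r b x) \<and>
     (\<forall>D. directed C r D \<longrightarrow> (\<exists>u. is_lub C r D u))"

definition maximal :: "'a set \<Rightarrow> ('a \<Rightarrow> 'a \<Rightarrow> bool) \<Rightarrow> 'a \<Rightarrow> bool" where
  "maximal C r x \<longleftrightarrow> x \<in> C \<and> (\<forall>y\<in>C. r x y \<longrightarrow> y = x)"

definition continuous_betw ::
  "'a set \<Rightarrow> ('a \<Rightarrow> 'a \<Rightarrow> bool) \<Rightarrow> 'b set \<Rightarrow> ('b \<Rightarrow> 'b \<Rightarrow> bool) \<Rightarrow> ('a \<Rightarrow> 'b) \<Rightarrow> bool" where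
  "continuous_betw C1 r1 C2 r2 f \<longleftrightarrow> (\<forall>x\<in>C1. f x \<in> C2) \<and>
     (\<forall>D. directed C1 r1 D \<longrightarrow> directed C2 r2 (f ` D) \<and>
        (\<forall>u. is_lub C1 r1 D u \<longrightarrow> is_lub C2 r2 (f ` D) (f u)))"

definition regular ::
  "'a set \<Rightarrow> ('a \<Rightarrow> 'a \<Rightarrow> bool) \<Rightarrow> 'b set \<Rightarrow> ('b \<Rightarrow> 'b \<Rightarrow> bool) \<Rightarrow> ('a \<Rightarrow> 'b) \<Rightarrow> bool" where
  "regular C1 r1 C2 r2 f \<longleftrightarrow> (\<forall>x\<in>C1. f x \<in> C2) \<and>
     (\<forall>x\<in>C1. \<forall>y\<in>C1. r1 x y \<longrightarrow> r2 (f x) (f y)) \<and>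
     (\<forall>x. maximal C1 r1 x \<longrightarrow> maximal C2 r2 (f x))"

definition On :: "'o::wellorder \<Rightarrow> 'o set" where
  "On z = {a. a \<le> z}"

definition sized_cpo :: "('a, 'o::wellorder) scpo \<Rightarrow> bool" where
  "sized_cpo S \<longleftrightarrow>
     is_cpo (car S) (le S) \<and>
     sz S ` car S = On (zeta S) \<and>
     continuous_betw (car S) (le S) (On (zeta S)) (\<le>) (sz S) \<and>
     (\<forall>x\<in>car S. sz S x = zeta S \<longleftrightarrow> maximal (car S) (le S) x) \<and>
     (\<forall>a\<in>On (zeta S). \<forall>x\<in>car S. cut S a x \<in> car S) \<and>
     (\<forall>a\<in>On (zeta S). \<forall>b\<in>On (zeta S). \<forall>x\<in>car S. \<forall>y\<in>car S.
         a \<le> b \<longrightarrow> le S x y \<longrightarrow> le S (cut S a x) (cut S b y)) \<and>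
     (\<forall>a\<in>On (zeta S). \<forall>x\<in>car S. a < sz S x \<longrightarrow> sz S (cut S a x) = a) \<and>
     (\<forall>a\<in>On (zeta S). \<forall>x\<in>car S. sz S x \<le> a \<longrightarrow> cut S a x = x)"

text \<open>Finite products of CPOs, tuples represented as lists, ordered componentwise.\<close>
definition prod_car :: "('a, 'o) scpo list \<Rightarrow> 'a list set" where
  "prod_car Ds = {xs. length xs = length Ds \<and> (\<forall>j<length Ds. xs ! j \<in> car (Ds ! j))}"

definition prod_le :: "('a, 'o) scpo list \<Rightarrow> 'a list \<Rightarrow> 'a list \<Rightarrow> bool" where
  "prod_le Ds xs ys \<longleftrightarrow> (\<forall>j<length Ds. le (Ds ! j) (xs ! j) (ys ! j))"

definition max_prod :: "('a, 'o) scpo list \<Rightarrow> 'a list set" where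
  "max_prod Ds = {xs. length xs = length Ds \<and>
     (\<forall>j<length Ds. maximal (car (Ds ! j)) (le (Ds ! j)) (xs ! j))}"

definition max_set :: "('a, 'o) scpo \<Rightarrow> 'a set" where
  "max_set D = {x. maximal (car D) (le D) x}"

definition ord_prod :: "'o::wellorder list \<Rightarrow> 'o list set" where
  "ord_prod zs = {as. length as = length zs \<and> (\<forall>j<length zs. as ! j \<le> zs ! j)}"

definition ord_prod_le :: "'o::wellorder list \<Rightarrow> 'o list \<Rightarrow> 'o list \<Rightarrow> bool" where
  "ord_prod_le zs as bs \<longleftrightarrow> (\<forall>j<length zs. as ! j \<le> bs ! j)"

definition ord_continuous :: "'o::wellorder list \<Rightarrow> 'o \<Rightarrow> ('o list \<Rightarrow> 'o) \<Rightarrow> bool" where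
  "ord_continuous zs z eta \<longleftrightarrow> continuous_betw (ord_prod zs) (ord_prod_le zs) (On z) (\<le>) eta"

text \<open>Production function eta for f : D_1 x ... x D_k -> E (f given on maximal tuples).\<close>
definition production_fun ::
  "('a, 'o::wellorder) scpo list \<Rightarrow> ('a, 'o) scpo \<Rightarrow> ('a list \<Rightarrow> 'a) \<Rightarrow> ('o list \<Rightarrow> 'o) \<Rightarrow> bool" where
  "production_fun Ds E f eta \<longleftrightarrow>
     (\<exists>fs. regular (prod_car Ds) (prod_le Ds) (car E) (le E) fs \<and>
           (\<forall>xs\<in>max_prod Ds. fs xs = f xs) \<and>
           (\<forall>xs\<in>prod_car Ds. eta (map2 (\<lambda>D x. sz D x) Ds xs) = sz E (fs xs)))"

text \<open>f : S -> Q is defined by corecursion from h and gs: the unique function in Q^S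
  (i.e. unique up to values outside S) satisfying the corecursive equation on S.\<close>
definition defined_by_corec ::
  "'x set \<Rightarrow> 'q set \<Rightarrow> ('x \<Rightarrow> 'q list \<Rightarrow> 'q) \<Rightarrow> ('x \<Rightarrow> 'x) list \<Rightarrow> ('x \<Rightarrow> 'q) \<Rightarrow> bool" where
  "defined_by_corec S Q h gs f \<longleftrightarrow>
     (\<forall>x\<in>S. f x \<in> Q) \<and> (\<forall>x\<in>S. f x = h x (map (\<lambda>g. f (g x)) gs)) \<and>
     (\<forall>f'. (\<forall>x\<in>S. f' x \<in> Q) \<and> (\<forall>x\<in>S. f' x = h x (map (\<lambda>g. f' (g x)) gs))
           \<longrightarrow> (\<forall>x\<in>S. f' x = f x))"

end

theory Submission
  imports Defs "HOL-Library.Bourbaki_Witt_Fixpoint"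
begin

text \<open>
  Extend h and the g_i^j to regular maps h* and (g_i^j)* on the whole CPOs and consider the
  operator \<open>\<Phi> F x = h* (x, F (g_1* x), ..., F (g_m* x))\<close> on functions from the product CPO to B.
  Iterating \<open>\<Phi>\<close> transfinitely from the bottom function (Bourbaki--Witt) gives a monotone
  fixpoint F. Along the iteration the size of F x depends only on the sizes of x, which defines
  \<open>\<eta>_f\<close>, and \<open>\<Phi>\<close> turns into the recursive equation for \<open>\<eta>_f\<close>; continuity of the
  size functions survives the suprema of the iteration. On maximal tuples F has a constant size
  \<open>\<beta>\<close> with \<open>\<beta> = \<eta>_h (\<zeta>, \<beta>, ..., \<beta>)\<close>, and the hypothesis on \<open>\<eta>_h\<close> forces
  \<open>\<beta> = \<zeta>_B\<close>. So F maps maximal tuples to maximal elements, satisfies the corecursive equation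
  there, and by uniqueness agrees with f.
\<close>

section \<open>Partial orders, CPOs and continuity\<close>

lemma On_iff [simp]: "a \<in> On z \<longleftrightarrow> a \<le> z"
  by (simp add: On_def)

lemma partial_order_refl: "is_partial_order C r \<Longrightarrow> x \<in> C \<Longrightarrow> r x x"
  unfolding is_partial_order_def by blast

lemma partial_order_antisym:
  "is_partial_order C r \<Longrightarrow> x \<in> C \<Longrightarrow> y \<in> C \<Longrightarrow> r x y \<Longrightarrow> r y x \<Longrightarrow> x = y"
  unfolding is_partial_order_def by blast

lemma partial_order_trans:
  "is_partial_order C r \<Longrightarrow> x \<in> C \<Longrightarrow> y \<in> C \<Longrightarrow> z \<in> C \<Longrightarrow> r x y \<Longrightarrow> r y z \<Longrightarrow> r x z"
  unfolding is_partial_order_def by blast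

lemma cpo_partial_order: "is_cpo C r \<Longrightarrow> is_partial_order C r"
  by (simp add: is_cpo_def)

lemma cpo_bot: "is_cpo C r \<Longrightarrow> \<exists>b\<in>C. \<forall>x\<in>C. r b x"
  by (simp add: is_cpo_def)

lemma chain_directed:
  assumes "is_partial_order C r" "D \<subseteq> C" "D \<noteq> {}"
    and "\<And>x y. x \<in> D \<Longrightarrow> y \<in> D \<Longrightarrow> r x y \<or> r y x"
  shows "directed C r D"
  unfolding directed_def using assms partial_order_refl[OF assms(1)] by blast

lemma cpo_lub: "is_cpo C r \<Longrightarrow> directed C r D \<Longrightarrow> \<exists>u. is_lub C r D u"
  by (simp add: is_cpo_def)

lemma directed_On: "directed (On z) (\<le>) S \<longleftrightarrow> S \<subseteq> On z \<and> S \<noteq> {}"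
  unfolding directed_def by (metis max.cobounded1 max.cobounded2 max_def)

lemma is_lub_On_unique: "is_lub (On z) (\<le>) S a \<Longrightarrow> is_lub (On z) (\<le>) S b \<Longrightarrow> a = b"
  unfolding is_lub_def by (meson order_antisym)

lemma continuous_betw_mono:
  assumes f: "continuous_betw C1 r1 C2 r2 f" and refl: "\<And>x. x \<in> C1 \<Longrightarrow> r1 x x"
    and ab: "a \<in> C1" "b \<in> C1" "r1 a b"
  shows "r2 (f a) (f b)"
proof -
  have "directed C1 r1 {a, b}" using ab refl by (auto simp: directed_def)
  moreover have "is_lub C1 r1 {a, b} b" using ab refl by (auto simp: is_lub_def)
  ultimately have "is_lub C2 r2 (f ` {a, b}) (f b)"
    using f unfolding continuous_betw_def by blast
  then show ?thesis by (simp add: is_lub_def)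
qed

lemma continuous_betw_comp:
  assumes f: "continuous_betw C1 r1 C2 r2 f" and g: "continuous_betw C2 r2 C3 r3 g"
  shows "continuous_betw C1 r1 C3 r3 (g \<circ> f)"
proof -
  have "(g \<circ> f) ` D = g ` f ` D" for D by auto
  then show ?thesis using assms unfolding continuous_betw_def by simp
qed

lemma continuous_betw_cong:
  assumes f: "continuous_betw C1 r1 C2 r2 f" and eq: "\<And>x. x \<in> C1 \<Longrightarrow> f' x = f x"
  shows "continuous_betw C1 r1 C2 r2 f'"
  unfolding continuous_betw_def
proof (intro conjI allI impI ballI)
  show "f' x \<in> C2" if "x \<in> C1" for x using f that eq by (simp add: continuous_betw_def)
  fix D assume D: "directed C1 r1 D"
  then have "f' ` D = f ` D" using eq by (intro image_cong refl) (auto simp: directed_def)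
  then show "directed C2 r2 (f' ` D)" using f D by (simp add: continuous_betw_def)
  fix u assume "is_lub C1 r1 D u"
  then show "is_lub C2 r2 (f' ` D) (f' u)"
    using f D \<open>f' ` D = f ` D\<close> eq by (auto simp: continuous_betw_def is_lub_def)
qed

lemma continuous_betw_On_lub:
  assumes M: "M \<noteq> {}"
    and cont: "\<And>F. F \<in> M \<Longrightarrow> continuous_betw C r (On z) (\<le>) (E F)"
    and lub: "\<And>a. a \<in> C \<Longrightarrow> is_lub (On z) (\<le>) ((\<lambda>F. E F a) ` M) (e a)"
  shows "continuous_betw C r (On z) (\<le>) e"
  unfolding continuous_betw_def
proof (intro conjI allI impI ballI)
  show "e x \<in> On z" if "x \<in> C" for x using lub[OF that] by (simp add: is_lub_def)
  fix D assume D: "directed C r D"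
  then have Ds: "D \<subseteq> C" "D \<noteq> {}" by (auto simp: directed_def)
  show "directed (On z) (\<le>) (e ` D)"
    unfolding directed_On using Ds lub by (auto simp: is_lub_def)
  fix u assume u: "is_lub C r D u"
  then have uC: "u \<in> C" by (simp add: is_lub_def)
  have EF_lub: "is_lub (On z) (\<le>) (E F ` D) (E F u)" if "F \<in> M" for F
    using cont[OF that] D u unfolding continuous_betw_def by blast
  show "is_lub (On z) (\<le>) (e ` D) (e u)" unfolding is_lub_def
  proof (intro conjI ballI impI)
    show "e u \<in> On z" using lub[OF uC] by (simp add: is_lub_def)
    fix y assume "y \<in> e ` D"
    then obtain d where d: "d \<in> D" "y = e d" by auto
    have "E F d \<le> e u" if F: "F \<in> M" for F
    proof -
      have "E F d \<le> E F u" using EF_lub[OF F] d by (simp add: is_lub_def)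
      also have "E F u \<le> e u" using lub[OF uC] F by (simp add: is_lub_def)
      finally show ?thesis .
    qed
    then show "y \<le> e u"
      using lub[of d] Ds d \<open>e u \<in> On z\<close> unfolding is_lub_def by blast
  next
    fix v assume v: "v \<in> On z" "\<forall>y\<in>e ` D. y \<le> v"
    have "E F u \<le> v" if F: "F \<in> M" for F
    proof -
      have "E F d \<le> v" if "d \<in> D" for d
        using lub[of d] Ds that F v by (force simp: is_lub_def)
      then show ?thesis using EF_lub[OF F] v(1) unfolding is_lub_def by blast
    qed
    then show "e u \<le> v" using lub[OF uC] v(1) unfolding is_lub_def by blast
  qed
qed

section \<open>Continuous maps between products of ordinals\<close>

lemma ord_prod_le_refl: "ord_prod_le zs a a"
  by (simp add: ord_prod_le_def)

lemma is_lub_ord_prod_nth: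
  assumes "is_lub (ord_prod zs) (ord_prod_le zs) D u" "j < length zs"
  shows "is_lub (On (zs ! j)) (\<le>) ((\<lambda>d. d ! j) ` D) (u ! j)"
proof -
  have u: "u \<in> ord_prod zs" "\<forall>d\<in>D. ord_prod_le zs d u"
    "\<forall>v\<in>ord_prod zs. (\<forall>d\<in>D. ord_prod_le zs d v) \<longrightarrow> ord_prod_le zs u v"
    using assms(1) unfolding is_lub_def by auto
  show ?thesis unfolding is_lub_def
  proof (intro conjI ballI impI)
    show "u ! j \<in> On (zs ! j)" using u(1) assms(2) by (simp add: ord_prod_def)
    show "x \<le> u ! j" if "x \<in> (\<lambda>d. d ! j) ` D" for x
      using that u(2) assms(2) by (auto simp: ord_prod_le_def)
    fix v assume v: "v \<in> On (zs ! j)" "\<forall>x\<in>(\<lambda>d. d ! j) ` D. x \<le> v"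
    have w: "u[j := v] \<in> ord_prod zs" using u(1) v(1) assms(2)
      by (auto simp: ord_prod_def nth_list_update)
    have "\<forall>d\<in>D. ord_prod_le zs d (u[j := v])"
      using u(1,2) v(2) assms(2) by (auto simp: ord_prod_le_def ord_prod_def nth_list_update)
    then have "ord_prod_le zs u (u[j := v])" using u(3) w by blast
    then show "u ! j \<le> v" using assms(2) u(1) by (auto simp: ord_prod_le_def ord_prod_def)
  qed
qed

lemma is_lub_ord_prodI:
  assumes "u \<in> ord_prod zs"
    and "\<And>j. j < length zs \<Longrightarrow> is_lub (On (zs ! j)) (\<le>) ((\<lambda>d. d ! j) ` D) (u ! j)"
  shows "is_lub (ord_prod zs) (ord_prod_le zs) D u"
  using assms unfolding is_lub_def ord_prod_le_def ord_prod_def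
  by (auto simp: image_iff)

lemma ord_continuous_range: "ord_continuous zs z e \<Longrightarrow> a \<in> ord_prod zs \<Longrightarrow> e a \<le> z"
  unfolding ord_continuous_def continuous_betw_def by auto

lemma ord_continuous_mono:
  "ord_continuous zs z e \<Longrightarrow> a \<in> ord_prod zs \<Longrightarrow> b \<in> ord_prod zs \<Longrightarrow> ord_prod_le zs a b
    \<Longrightarrow> e a \<le> e b"
  unfolding ord_continuous_def by (erule continuous_betw_mono) (auto simp: ord_prod_le_refl)

lemma ord_continuous_nth: "j < length zs \<Longrightarrow> ord_continuous zs (zs ! j) (\<lambda>a. a ! j)"
  unfolding ord_continuous_def continuous_betw_def directed_On
  by (auto simp: ord_prod_def directed_def is_lub_ord_prod_nth)

lemma ord_continuous_const: "c \<le> z \<Longrightarrow> ord_continuous zs z (\<lambda>_. c)"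
  unfolding ord_continuous_def continuous_betw_def
  by (auto simp: directed_On directed_def is_lub_def)

lemma ord_continuous_tuple:
  assumes psi: "\<And>k. k < length ws \<Longrightarrow> ord_continuous zs (ws ! k) (psi k)"
  shows "continuous_betw (ord_prod zs) (ord_prod_le zs) (ord_prod ws) (ord_prod_le ws)
           (\<lambda>a. map (\<lambda>k. psi k a) [0..<length ws])" (is "continuous_betw _ _ _ _ ?T")
  unfolding continuous_betw_def
proof (intro conjI allI impI ballI)
  show T: "?T a \<in> ord_prod ws" if "a \<in> ord_prod zs" for a
    using ord_continuous_range[OF psi that] by (simp add: ord_prod_def)
  have T_mono: "ord_prod_le ws (?T a) (?T b)"
    if "a \<in> ord_prod zs" "b \<in> ord_prod zs" "ord_prod_le zs a b" for a b
    using ord_continuous_mono[OF psi that] by (simp add: ord_prod_le_def)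
  fix D assume D: "directed (ord_prod zs) (ord_prod_le zs) D"
  then have Ds: "D \<subseteq> ord_prod zs" "D \<noteq> {}"
    and Dup: "\<And>a b. a \<in> D \<Longrightarrow> b \<in> D \<Longrightarrow> \<exists>c\<in>D. ord_prod_le zs a c \<and> ord_prod_le zs b c"
    by (auto simp: directed_def)
  show "directed (ord_prod ws) (ord_prod_le ws) (?T ` D)"
    unfolding directed_def
  proof (intro conjI ballI)
    fix x y assume "x \<in> ?T ` D" "y \<in> ?T ` D"
    then obtain a b where "a \<in> D" "b \<in> D" "x = ?T a" "y = ?T b" by blast
    with Dup Ds T_mono show "\<exists>z\<in>?T ` D. ord_prod_le ws x z \<and> ord_prod_le ws y z"
      by (meson image_eqI subsetD)
  qed (use Ds T in auto)
  fix u assume u: "is_lub (ord_prod zs) (ord_prod_le zs) D u"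
  have "is_lub (On (ws ! k)) (\<le>) (psi k ` D) (psi k u)" if "k < length ws" for k
    using psi[OF that] D u unfolding ord_continuous_def continuous_betw_def by blast
  moreover have "(\<lambda>d. d ! k) ` ?T ` D = psi k ` D" if "k < length ws" for k
    using that by (auto simp: image_image)
  ultimately show "is_lub (ord_prod ws) (ord_prod_le ws) (?T ` D) (?T u)"
    using u T by (intro is_lub_ord_prodI) (auto simp: is_lub_def)
qed

lemma ord_continuous_compose:
  assumes "ord_continuous ws w e" and "\<And>k. k < length ws \<Longrightarrow> ord_continuous zs (ws ! k) (psi k)"
  shows "ord_continuous zs w (\<lambda>a. e (map (\<lambda>k. psi k a) [0..<length ws]))"
  using continuous_betw_comp[OF ord_continuous_tuple[OF assms(2)] assms(1)[unfolded ord_continuous_def]]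
  by (simp add: ord_continuous_def comp_def)

section \<open>Fixpoints of inflationary maps on pointwise ordered functions\<close>

lemma pointwise_partial_order:
  assumes po: "is_partial_order C r"
    and car: "\<And>F x. F \<in> P \<Longrightarrow> x \<in> X \<Longrightarrow> F x \<in> C"
    and outside: "\<And>F x. F \<in> P \<Longrightarrow> x \<notin> X \<Longrightarrow> F x = c"
  shows "partial_order_on P {(F, F'). F \<in> P \<and> F' \<in> P \<and> (\<forall>x\<in>X. r (F x) (F' x))}"
  unfolding order_on_defs
proof (intro conjI)
  show "{(F, F'). F \<in> P \<and> F' \<in> P \<and> (\<forall>x\<in>X. r (F x) (F' x))} \<subseteq> P \<times> P" by auto
  show "refl_on P {(F, F'). F \<in> P \<and> F' \<in> P \<and> (\<forall>x\<in>X. r (F x) (F' x))}"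
    using partial_order_refl[OF po] car by (simp add: refl_on_def)
  show "trans {(F, F'). F \<in> P \<and> F' \<in> P \<and> (\<forall>x\<in>X. r (F x) (F' x))}"
  proof (rule transI)
    fix F G H
    assume "(F, G) \<in> {(F, F'). F \<in> P \<and> F' \<in> P \<and> (\<forall>x\<in>X. r (F x) (F' x))}"
      and "(G, H) \<in> {(F, F'). F \<in> P \<and> F' \<in> P \<and> (\<forall>x\<in>X. r (F x) (F' x))}"
    then have "F \<in> P" "G \<in> P" "H \<in> P" "\<forall>x\<in>X. r (F x) (G x)" "\<forall>x\<in>X. r (G x) (H x)" by auto
    then show "(F, H) \<in> {(F, F'). F \<in> P \<and> F' \<in> P \<and> (\<forall>x\<in>X. r (F x) (F' x))}"
      using partial_order_trans[OF po] car by (simp add: Ball_def) (metis)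
  qed
  show "antisym {(F, F'). F \<in> P \<and> F' \<in> P \<and> (\<forall>x\<in>X. r (F x) (F' x))}"
  proof (rule antisymI)
    fix F G assume "(F, G) \<in> {(F, F'). F \<in> P \<and> F' \<in> P \<and> (\<forall>x\<in>X. r (F x) (F' x))}"
      and "(G, F) \<in> {(F, F'). F \<in> P \<and> F' \<in> P \<and> (\<forall>x\<in>X. r (F x) (F' x))}"
    then have "F \<in> P" "G \<in> P" "\<forall>x\<in>X. r (F x) (G x)" "\<forall>x\<in>X. r (G x) (F x)" by auto
    then show "F = G"
      using partial_order_antisym[OF po] car outside by (metis ext)
  qed
qed

lemma cpo_pointwise_fixpoint:
  fixes Phi :: "('x \<Rightarrow> 'b) \<Rightarrow> 'x \<Rightarrow> 'b"
  assumes cpo: "is_cpo C r"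
    and Q_car: "\<And>F x. Q F \<Longrightarrow> x \<in> X \<Longrightarrow> F x \<in> C"
    and Q_cong: "\<And>F G. Q F \<Longrightarrow> (\<And>x. x \<in> X \<Longrightarrow> G x = F x) \<Longrightarrow> Q G"
    and Q_lub: "\<And>M L. M \<noteq> {} \<Longrightarrow> (\<And>F. F \<in> M \<Longrightarrow> Q F)
       \<Longrightarrow> (\<And>F F'. F \<in> M \<Longrightarrow> F' \<in> M \<Longrightarrow> (\<forall>x\<in>X. r (F x) (F' x)) \<or> (\<forall>x\<in>X. r (F' x) (F x)))
       \<Longrightarrow> (\<And>x. x \<in> X \<Longrightarrow> is_lub C r ((\<lambda>F. F x) ` M) (L x)) \<Longrightarrow> Q L"
    and Phi_Q: "\<And>F. Q F \<Longrightarrow> Q (Phi F)"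
    and Phi_infl: "\<And>F x. Q F \<Longrightarrow> x \<in> X \<Longrightarrow> r (F x) (Phi F x)"
    and Q_nonempty: "Q F0"
  shows "\<exists>F. Q F \<and> (\<forall>x\<in>X. Phi F x = F x)"
proof -
  \<comment> \<open>Values outside X are normalised to \<open>undefined\<close>, which makes the pointwise order antisymmetric.\<close>
  define restr where "restr F x = (if x \<in> X then F x else undefined)" for F :: "'x \<Rightarrow> 'b" and x
  define P where "P = {F. Q F \<and> (\<forall>x. x \<notin> X \<longrightarrow> F x = undefined)}"
  define leq where "leq = {(F, F'). F \<in> P \<and> F' \<in> P \<and> (\<forall>x\<in>X. r (F x) (F' x))}"
  define lub where "lub M = restr (\<lambda>x. SOME u. is_lub C r ((\<lambda>F. F x) ` M) u)" for M
  have po: "is_partial_order C r" using cpo by (rule cpo_partial_order)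
  have restr_P: "restr F \<in> P" if "Q F" for F
    using Q_cong[OF that] by (simp add: P_def restr_def)
  have Field_leq: "Field leq = P"
    using partial_order_refl[OF po] Q_car by (auto simp: Field_def leq_def P_def)
  have chain: "M \<subseteq> P" "\<And>F F'. F \<in> M \<Longrightarrow> F' \<in> M \<Longrightarrow> (\<forall>x\<in>X. r (F x) (F' x)) \<or> (\<forall>x\<in>X. r (F' x) (F x))"
    if "M \<in> Chains leq" for M
    using that by (auto simp: Chains_def leq_def)
  have lub: "is_lub C r ((\<lambda>F. F x) ` M) (lub M x)" if M: "M \<in> Chains leq" "M \<noteq> {}" and x: "x \<in> X" for M x
  proof -
    have "\<exists>u. is_lub C r ((\<lambda>F. F x) ` M) u"
    proof (intro cpo_lub[OF cpo] chain_directed[OF po])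
      show "(\<lambda>F. F x) ` M \<subseteq> C" using chain(1)[OF M(1)] x by (auto simp: P_def Q_car)
      fix a b assume "a \<in> (\<lambda>F. F x) ` M" "b \<in> (\<lambda>F. F x) ` M"
      then obtain F F' where "F \<in> M" "F' \<in> M" "a = F x" "b = F' x" by blast
      then show "r a b \<or> r b a" using chain(2)[OF M(1)] x by metis
    qed (use M(2) in simp)
    then show ?thesis using x by (simp add: lub_def restr_def someI_ex)
  qed
  have lub_P: "lub M \<in> P" if M: "M \<in> Chains leq" "M \<noteq> {}" for M
  proof -
    have "Q (lub M)"
    proof (rule Q_lub[OF M(2)])
      show "Q F" if "F \<in> M" for F using chain(1)[OF M(1)] that by (auto simp: P_def)
      show "(\<forall>x\<in>X. r (F x) (F' x)) \<or> (\<forall>x\<in>X. r (F' x) (F x))" if "F \<in> M" "F' \<in> M" for F F'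
        using chain(2)[OF M(1) that] .
      show "is_lub C r ((\<lambda>F. F x) ` M) (lub M x)" if "x \<in> X" for x using lub[OF M that] .
    qed
    then show ?thesis by (simp add: P_def lub_def restr_def)
  qed
  interpret bourbaki_witt_fixpoint lub leq "\<lambda>F. restr (Phi F)"
  proof
    have "partial_order_on P leq"
      unfolding leq_def using po Q_car by (intro pointwise_partial_order) (auto simp: P_def)
    then show "Partial_order leq" by (simp only: Field_leq)
  next
    fix M F' assume M: "M \<in> Chains leq" "M \<noteq> {}" and up: "\<And>F. F \<in> M \<Longrightarrow> (F, F') \<in> leq"
    then have F': "F' \<in> P" by (auto simp: leq_def)
    have "r (lub M x) (F' x)" if x: "x \<in> X" for x
    proof -
      have "F' x \<in> C" using F' x Q_car by (simp add: P_def)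
      moreover have "\<forall>y\<in>(\<lambda>F. F x) ` M. r y (F' x)" using up x by (auto simp: leq_def)
      ultimately show ?thesis using lub[OF M x] unfolding is_lub_def by blast
    qed
    then show "(lub M, F') \<in> leq" using lub_P[OF M] F' by (simp add: leq_def)
  next
    fix M F assume M: "M \<in> Chains leq" and F: "F \<in> M"
    then have "M \<noteq> {}" by blast
    then show "(F, lub M) \<in> leq"
      using lub[OF M] lub_P[OF M] chain(1)[OF M] F by (auto simp: leq_def is_lub_def)
  next
    fix M assume "M \<in> Chains leq" "M \<noteq> {}"
    then show "lub M \<in> Field leq" using lub_P Field_leq by simp
  next
    fix F assume "F \<in> Field leq"
    then show "(F, restr (Phi F)) \<in> leq"
      using Field_leq restr_P Phi_Q Phi_infl by (auto simp: leq_def P_def restr_def)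
  qed
  have F0: "restr F0 \<in> Field leq" using restr_P[OF Q_nonempty] Field_leq by simp
  define F where "F = fixp_above (restr F0)"
  have "F \<in> P" using fixp_above_Field[OF F0] Field_leq by (simp add: F_def)
  moreover have "Phi F x = F x" if "x \<in> X" for x
    using fixp_above_unfold[OF F0] that unfolding F_def[symmetric] by (metis restr_def)
  ultimately show ?thesis by (auto simp: P_def)
qed

section \<open>Sized CPOs and their products\<close>

abbreviation sizes :: "('a, 'o) scpo list \<Rightarrow> 'a list \<Rightarrow> 'o list" where
  "sizes Ds xs \<equiv> map2 (\<lambda>D x. sz D x) Ds xs"

lemma sizes_replicate: "length ys = m \<Longrightarrow> sizes (replicate m B) ys = map (sz B) ys"
  by (rule nth_equalityI) auto

lemma sized_cpo_cpo: "sized_cpo D \<Longrightarrow> is_cpo (car D) (le D)"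
  by (simp add: sized_cpo_def)

lemma sized_cpo_refl: "sized_cpo D \<Longrightarrow> x \<in> car D \<Longrightarrow> le D x x"
  by (metis sized_cpo_cpo cpo_partial_order partial_order_refl)

lemma sized_cpo_sz_le: "sized_cpo D \<Longrightarrow> x \<in> car D \<Longrightarrow> sz D x \<le> zeta D"
  unfolding sized_cpo_def by (metis On_iff image_eqI)

lemma sized_cpo_sz_surj: "sized_cpo D \<Longrightarrow> a \<le> zeta D \<Longrightarrow> \<exists>x\<in>car D. sz D x = a"
  unfolding sized_cpo_def by (metis On_iff imageE)

lemma sized_cpo_maximal_iff:
  "sized_cpo D \<Longrightarrow> x \<in> car D \<Longrightarrow> sz D x = zeta D \<longleftrightarrow> maximal (car D) (le D) x"
  by (simp add: sized_cpo_def)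

lemma sized_cpo_sz_continuous:
  "sized_cpo D \<Longrightarrow> continuous_betw (car D) (le D) (On (zeta D)) (\<le>) (sz D)"
  by (simp add: sized_cpo_def)

lemma sized_cpo_sz_chain_lub:
  assumes D: "sized_cpo D" and S: "S \<subseteq> car D" "S \<noteq> {}"
    and chain: "\<And>u v. u \<in> S \<Longrightarrow> v \<in> S \<Longrightarrow> le D u v \<or> le D v u"
    and l: "is_lub (car D) (le D) S l"
  shows "is_lub (On (zeta D)) (\<le>) (sz D ` S) (sz D l)"
proof -
  have "directed (car D) (le D) S"
    using chain_directed[OF cpo_partial_order[OF sized_cpo_cpo[OF D]] S chain] .
  then show ?thesis using sized_cpo_sz_continuous[OF D] l unfolding continuous_betw_def by blast
qed

lemma max_prod_subset_prod_car: "max_prod Ds \<subseteq> prod_car Ds"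
  by (auto simp: max_prod_def prod_car_def maximal_def)

lemma max_prod_maximal: "x \<in> max_prod Ds \<Longrightarrow> maximal (prod_car Ds) (prod_le Ds) x"
  unfolding max_prod_def maximal_def prod_car_def prod_le_def
  by (auto intro!: nth_equalityI)

lemma maximal_max_prod:
  assumes refl: "\<And>j x. j < length Ds \<Longrightarrow> x \<in> car (Ds ! j) \<Longrightarrow> le (Ds ! j) x x"
    and x: "maximal (prod_car Ds) (prod_le Ds) x"
  shows "x \<in> max_prod Ds"
proof -
  have xc: "x \<in> prod_car Ds" and xm: "\<forall>y\<in>prod_car Ds. prod_le Ds x y \<longrightarrow> y = x"
    using x by (auto simp: maximal_def)
  have "maximal (car (Ds ! j)) (le (Ds ! j)) (x ! j)" if j: "j < length Ds" for j
    unfolding maximal_def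
  proof (intro conjI ballI impI)
    show "x ! j \<in> car (Ds ! j)" using xc j by (simp add: prod_car_def)
    fix y assume y: "y \<in> car (Ds ! j)" "le (Ds ! j) (x ! j) y"
    have "x[j := y] \<in> prod_car Ds" using xc y j by (auto simp: prod_car_def nth_list_update)
    moreover have "prod_le Ds x (x[j := y])"
      unfolding prod_le_def
    proof (intro allI impI)
      fix k assume "k < length Ds"
      then show "le (Ds ! k) (x ! k) (x[j := y] ! k)"
        using xc y refl by (cases "k = j") (auto simp: prod_car_def)
    qed
    ultimately have "x[j := y] = x" using xm by blast
    moreover have "length x = length Ds" using xc by (simp add: prod_car_def)
    ultimately show "y = x ! j" using j by (metis nth_list_update_eq)
  qed
  then show ?thesis using xc by (simp add: max_prod_def prod_car_def)
qed

definition sized_extension ::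
  "('a, 'o::wellorder) scpo list \<Rightarrow> ('a, 'o) scpo \<Rightarrow> ('a list \<Rightarrow> 'a) \<Rightarrow> ('o list \<Rightarrow> 'o)
     \<Rightarrow> ('a list \<Rightarrow> 'a) \<Rightarrow> bool" where
  "sized_extension Ds E f eta fs \<longleftrightarrow>
     regular (prod_car Ds) (prod_le Ds) (car E) (le E) fs \<and>
     (\<forall>xs\<in>max_prod Ds. fs xs = f xs) \<and>
     (\<forall>xs\<in>prod_car Ds. eta (sizes Ds xs) = sz E (fs xs))"

lemma production_fun_iff: "production_fun Ds E f eta \<longleftrightarrow> (\<exists>fs. sized_extension Ds E f eta fs)"
  by (simp add: production_fun_def sized_extension_def)

section \<open>The size of a corecursively defined function\<close>

text \<open>hs and gs i j are the regular extensions h* and (g_i^j)* witnessing the production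
  functions eta_h and eta_g i j.\<close>

locale corec_production =
  fixes As :: "('a, 'o::wellorder) scpo list" and B :: "('a, 'o) scpo"
    and m :: nat and h :: "'a list \<Rightarrow> 'a" and g :: "nat \<Rightarrow> 'a list \<Rightarrow> 'a list"
    and eta_h :: "'o list \<Rightarrow> 'o" and eta_g :: "nat \<Rightarrow> nat \<Rightarrow> 'o list \<Rightarrow> 'o"
    and hs :: "'a list \<Rightarrow> 'a" and gs :: "nat \<Rightarrow> nat \<Rightarrow> 'a list \<Rightarrow> 'a"
  assumes As_sized: "\<forall>D\<in>set As. sized_cpo D"
    and B_sized: "sized_cpo B"
    and g_type: "\<forall>i<m. \<forall>xs\<in>max_prod As. g i xs \<in> max_prod As"
    and hs_ext: "sized_extension (As @ replicate m B) B h eta_h hs"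
    and gs_ext: "\<forall>i<m. \<forall>j<length As. sized_extension As (As ! j) (\<lambda>xs. g i xs ! j) (eta_g i j) (gs i j)"
    and eta_h_cond: "\<forall>bs. length bs = m \<and> (\<forall>i<m. bs ! i \<le> zeta B) \<and> (\<exists>i<m. bs ! i < zeta B)
                      \<longrightarrow> Min (set bs) < eta_h (map zeta As @ bs)"
begin

abbreviation "n \<equiv> length As"
abbreviation "carA \<equiv> prod_car As"

lemma As_nth_sized: "j < n \<Longrightarrow> sized_cpo (As ! j)"
  using As_sized by simp

lemma B_po: "is_partial_order (car B) (le B)"
  using B_sized by (simp add: sized_cpo_cpo cpo_partial_order)

lemma hs_regular: "regular (prod_car (As @ replicate m B)) (prod_le (As @ replicate m B)) (car B) (le B) hs"
  and hs_max_prod: "xs \<in> max_prod (As @ replicate m B) \<Longrightarrow> hs xs = h xs"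
  and hs_sizes: "xs \<in> prod_car (As @ replicate m B) \<Longrightarrow> sz B (hs xs) = eta_h (sizes (As @ replicate m B) xs)"
  using hs_ext by (auto simp: sized_extension_def)

definition g_ext :: "nat \<Rightarrow> 'a list \<Rightarrow> 'a list" where
  "g_ext i x = map (\<lambda>j. gs i j x) [0..<n]"

lemma g_ext_car: "i < m \<Longrightarrow> x \<in> carA \<Longrightarrow> g_ext i x \<in> carA"
  using gs_ext by (auto simp: g_ext_def prod_car_def sized_extension_def regular_def)

lemma g_ext_mono: "i < m \<Longrightarrow> x \<in> carA \<Longrightarrow> y \<in> carA \<Longrightarrow> prod_le As x y \<Longrightarrow> prod_le As (g_ext i x) (g_ext i y)"
  using gs_ext by (auto simp: g_ext_def prod_le_def sized_extension_def regular_def)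

lemma g_ext_sizes: "i < m \<Longrightarrow> x \<in> carA \<Longrightarrow> sizes As (g_ext i x) = map (\<lambda>j. eta_g i j (sizes As x)) [0..<n]"
  using gs_ext by (auto simp: g_ext_def sized_extension_def intro!: nth_equalityI)

lemma g_ext_max_prod: "i < m \<Longrightarrow> x \<in> max_prod As \<Longrightarrow> g_ext i x = g i x"
  using gs_ext g_type by (fastforce simp: g_ext_def sized_extension_def max_prod_def intro!: nth_equalityI)

lemma append_prod_car:
  "x \<in> carA \<Longrightarrow> length ys = m \<Longrightarrow> \<forall>i<m. ys ! i \<in> car B \<Longrightarrow> x @ ys \<in> prod_car (As @ replicate m B)"
  by (auto simp: prod_car_def nth_append)

lemma append_prod_le:
  "x \<in> carA \<Longrightarrow> y \<in> carA \<Longrightarrow> prod_le As x y \<Longrightarrow> length ys = m \<Longrightarrow> \<forall>i<m. le B (ys ! i) (ys' ! i)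
    \<Longrightarrow> prod_le (As @ replicate m B) (x @ ys) (y @ ys')"
  by (auto simp: prod_car_def prod_le_def nth_append)

lemma append_max_prod:
  "x \<in> max_prod As \<Longrightarrow> length ys = m \<Longrightarrow> \<forall>i<m. maximal (car B) (le B) (ys ! i)
    \<Longrightarrow> x @ ys \<in> max_prod (As @ replicate m B)"
  by (auto simp: max_prod_def nth_append)

lemma sz_hs_append:
  assumes "x \<in> carA" "length ys = m" "\<forall>i<m. ys ! i \<in> car B"
  shows "sz B (hs (x @ ys)) = eta_h (sizes As x @ map (sz B) ys)"
  using hs_sizes[OF append_prod_car[OF assms]] assms(1,2)
  by (simp add: prod_car_def sizes_replicate del: map2_map_map)

definition corec_step :: "('a list \<Rightarrow> 'a) \<Rightarrow> 'a list \<Rightarrow> 'a" where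
  "corec_step F x = hs (x @ map (\<lambda>i. F (g_ext i x)) [0..<m])"

lemma corec_step_car: "\<forall>x\<in>carA. F x \<in> car B \<Longrightarrow> x \<in> carA \<Longrightarrow> corec_step F x \<in> car B"
  using hs_regular g_ext_car append_prod_car unfolding corec_step_def regular_def by simp

lemma corec_step_le:
  assumes F: "\<forall>x\<in>carA. F x \<in> car B" "\<forall>x\<in>carA. F' x \<in> car B"
    and xy: "x \<in> carA" "y \<in> carA" "prod_le As x y"
    and args: "\<forall>i<m. le B (F (g_ext i x)) (F' (g_ext i y))"
  shows "le B (corec_step F x) (corec_step F' y)"
proof -
  have "prod_le (As @ replicate m B) (x @ map (\<lambda>i. F (g_ext i x)) [0..<m]) (y @ map (\<lambda>i. F' (g_ext i y)) [0..<m])"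
    using xy args by (intro append_prod_le) auto
  moreover have "x @ map (\<lambda>i. F (g_ext i x)) [0..<m] \<in> prod_car (As @ replicate m B)"
    "y @ map (\<lambda>i. F' (g_ext i y)) [0..<m] \<in> prod_car (As @ replicate m B)"
    using xy F g_ext_car by (auto intro!: append_prod_car)
  ultimately show ?thesis using hs_regular unfolding regular_def corec_step_def by simp
qed

lemma corec_step_mono:
  assumes "\<forall>x\<in>carA. F x \<in> car B" "\<forall>x\<in>carA. \<forall>y\<in>carA. prod_le As x y \<longrightarrow> le B (F x) (F y)"
    and "x \<in> carA" "y \<in> carA" "prod_le As x y"
  shows "le B (corec_step F x) (corec_step F y)"
  using assms g_ext_car g_ext_mono by (intro corec_step_le) auto

lemma corec_step_le_pointwise:
  assumes "\<forall>x\<in>carA. F x \<in> car B" "\<forall>x\<in>carA. F' x \<in> car B" "\<forall>x\<in>carA. le B (F x) (F' x)"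
    and x: "x \<in> carA"
  shows "le B (corec_step F x) (corec_step F' x)"
proof -
  have "prod_le As x x"
    using x As_sized by (auto simp: prod_le_def prod_car_def intro: sized_cpo_refl)
  then show ?thesis using assms g_ext_car by (intro corec_step_le) auto
qed

lemma sizes_ord_prod: "x \<in> carA \<Longrightarrow> sizes As x \<in> ord_prod (map zeta As)"
  using As_sized by (auto simp: ord_prod_def prod_car_def intro!: sized_cpo_sz_le)

lemma sizes_max_prod:
  assumes x: "x \<in> max_prod As"
  shows "sizes As x = map zeta As"
proof (rule nth_equalityI)
  show "length (sizes As x) = length (map zeta As)" using x by (simp add: max_prod_def)
  fix j assume "j < length (sizes As x)"
  then have j: "j < n" by simp
  then have "maximal (car (As ! j)) (le (As ! j)) (x ! j)" using x by (simp add: max_prod_def)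
  then have "sz (As ! j) (x ! j) = zeta (As ! j)"
    using sized_cpo_maximal_iff[OF As_nth_sized[OF j]] by (simp add: maximal_def)
  then show "sizes As x ! j = map zeta As ! j" using j x by (simp add: max_prod_def)
qed

definition size_rep :: "'o list \<Rightarrow> 'a list" where
  "size_rep a = (SOME x. x \<in> carA \<and> sizes As x = a)"

lemma size_rep:
  assumes a: "a \<in> ord_prod (map zeta As)"
  shows "size_rep a \<in> carA" "sizes As (size_rep a) = a"
proof -
  have "\<forall>j. \<exists>y. j < n \<longrightarrow> y \<in> car (As ! j) \<and> sz (As ! j) y = a ! j"
    using sized_cpo_sz_surj As_nth_sized a by (fastforce simp: ord_prod_def)
  from choice[OF this] obtain x
    where "\<forall>j. j < n \<longrightarrow> x j \<in> car (As ! j) \<and> sz (As ! j) (x j) = a ! j" by blast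
  then have "map x [0..<n] \<in> carA \<and> sizes As (map x [0..<n]) = a"
    using a by (auto simp: prod_car_def ord_prod_def intro!: nth_equalityI)
  then have "size_rep a \<in> carA \<and> sizes As (size_rep a) = a"
    unfolding size_rep_def by (rule someI)
  then show "size_rep a \<in> carA" "sizes As (size_rep a) = a" by auto
qed

definition size_invariant :: "('a list \<Rightarrow> 'a) \<Rightarrow> bool" where
  "size_invariant F \<longleftrightarrow> (\<forall>x\<in>carA. \<forall>y\<in>carA. sizes As x = sizes As y \<longrightarrow> sz B (F x) = sz B (F y))"

definition eta_of :: "('a list \<Rightarrow> 'a) \<Rightarrow> 'o list \<Rightarrow> 'o" where
  "eta_of F a = sz B (F (size_rep a))"

lemma eta_of_sizes:
  assumes "size_invariant F" and x: "x \<in> carA"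
  shows "eta_of F (sizes As x) = sz B (F x)"
  using assms size_rep[OF sizes_ord_prod[OF x]] unfolding size_invariant_def eta_of_def by blast

definition eta_step :: "('o list \<Rightarrow> 'o) \<Rightarrow> 'o list \<Rightarrow> 'o" where
  "eta_step e a = eta_h (a @ map (\<lambda>i. e (map (\<lambda>j. eta_g i j a) [0..<n])) [0..<m])"

lemma sz_corec_step:
  assumes F: "\<forall>x\<in>carA. F x \<in> car B" "size_invariant F" and x: "x \<in> carA"
  shows "sz B (corec_step F x) = eta_step (eta_of F) (sizes As x)"
proof -
  have "sz B (corec_step F x) = eta_h (sizes As x @ map (sz B) (map (\<lambda>i. F (g_ext i x)) [0..<m]))"
    using sz_hs_append x F g_ext_car by (simp add: corec_step_def)
  also have "map (sz B) (map (\<lambda>i. F (g_ext i x)) [0..<m])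
      = map (\<lambda>i. eta_of F (map (\<lambda>j. eta_g i j (sizes As x)) [0..<n])) [0..<m]"
    using eta_of_sizes[OF F(2) g_ext_car] g_ext_sizes x by (simp add: map_eq_conv)
  finally show ?thesis by (simp add: eta_step_def)
qed

lemma size_invariant_corec_step:
  assumes "\<forall>x\<in>carA. F x \<in> car B" "size_invariant F"
  shows "size_invariant (corec_step F)"
  unfolding size_invariant_def
proof (intro ballI impI)
  fix x y assume "x \<in> carA" "y \<in> carA" "sizes As x = sizes As y"
  then show "sz B (corec_step F x) = sz B (corec_step F y)"
    using sz_corec_step[OF assms] by metis
qed

lemma eta_of_corec_step:
  assumes F: "\<forall>x\<in>carA. F x \<in> car B" "size_invariant F" and a: "a \<in> ord_prod (map zeta As)"
  shows "eta_of (corec_step F) a = eta_step (eta_of F) a"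
proof -
  have "eta_of (corec_step F) a = eta_step (eta_of F) (sizes As (size_rep a))"
    unfolding eta_of_def[of "corec_step F"] using sz_corec_step[OF F size_rep(1)[OF a]] .
  then show ?thesis using size_rep(2)[OF a] by simp
qed

definition etas_continuous :: bool where
  "etas_continuous \<longleftrightarrow> ord_continuous (map zeta As @ replicate m (zeta B)) (zeta B) eta_h \<and>
     (\<forall>i<m. \<forall>j<n. ord_continuous (map zeta As) (zeta (As ! j)) (eta_g i j))"

lemma eta_step_continuous:
  assumes cont: etas_continuous and e: "ord_continuous (map zeta As) (zeta B) e"
  shows "ord_continuous (map zeta As) (zeta B) (eta_step e)"
proof -
  define ws where "ws = map zeta As @ replicate m (zeta B)"
  define psi where "psi k a = (if k < n then a ! k else e (map (\<lambda>j. eta_g (k - n) j a) [0..<n]))" for k a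
  have psi: "ord_continuous (map zeta As) (ws ! k) (psi k)" if k: "k < length ws" for k
  proof (cases "k < n")
    case True
    then have "psi k = (\<lambda>a. a ! k)" by (simp add: psi_def fun_eq_iff)
    then show ?thesis using ord_continuous_nth[of k "map zeta As"] True
      by (simp add: ws_def nth_append)
  next
    case False
    have "ord_continuous (map zeta As) (zeta B)
        (\<lambda>a. e (map (\<lambda>j. eta_g (k - n) j a) [0..<length (map zeta As)]))"
      using cont k False by (intro ord_continuous_compose[OF e]) (auto simp: etas_continuous_def ws_def)
    moreover have "psi k = (\<lambda>a. e (map (\<lambda>j. eta_g (k - n) j a) [0..<n]))"
      using False by (simp add: psi_def fun_eq_iff)
    ultimately show ?thesis using False k by (simp add: ws_def nth_append)
  qed
  have "ord_continuous (map zeta As) (zeta B) (\<lambda>a. eta_h (map (\<lambda>k. psi k a) [0..<length ws]))"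
    using cont psi by (intro ord_continuous_compose) (auto simp: etas_continuous_def ws_def)
  moreover have "eta_step e a = eta_h (map (\<lambda>k. psi k a) [0..<length ws])"
    if "a \<in> ord_prod (map zeta As)" for a
  proof -
    have "map (\<lambda>k. psi k a) [0..<length ws] = a @ map (\<lambda>i. e (map (\<lambda>j. eta_g i j a) [0..<n])) [0..<m]"
      using that by (intro nth_equalityI) (auto simp: ws_def psi_def nth_append ord_prod_def)
    then show ?thesis by (simp add: eta_step_def)
  qed
  ultimately show ?thesis
    unfolding ord_continuous_def by (rule continuous_betw_cong)
qed

text \<open>The invariants of the transfinite iteration of corec_step: they are preserved by
  corec_step and by pointwise suprema of chains, and at a fixpoint they make eta_of F a
  (continuous) production function.\<close>

definition admissible :: "('a list \<Rightarrow> 'a) \<Rightarrow> bool" where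
  "admissible F \<longleftrightarrow> (\<forall>x\<in>carA. F x \<in> car B) \<and>
     (\<forall>x\<in>carA. \<forall>y\<in>carA. prod_le As x y \<longrightarrow> le B (F x) (F y)) \<and>
     (\<forall>x\<in>carA. le B (F x) (corec_step F x)) \<and> size_invariant F \<and>
     (etas_continuous \<longrightarrow> ord_continuous (map zeta As) (zeta B) (eta_of F))"

lemma corec_step_cong:
  assumes "\<And>x. x \<in> carA \<Longrightarrow> G x = F x" and "x \<in> carA"
  shows "corec_step G x = corec_step F x"
proof -
  have args: "map (\<lambda>i. G (g_ext i x)) [0..<m] = map (\<lambda>i. F (g_ext i x)) [0..<m]"
    using assms g_ext_car by (intro map_cong) auto
  show ?thesis by (simp only: corec_step_def args)
qed

lemma admissible_cong:
  assumes F: "admissible F" and eq: "\<And>x. x \<in> carA \<Longrightarrow> G x = F x"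
  shows "admissible G"
proof -
  have eta_eq: "eta_of G a = eta_of F a" if "a \<in> ord_prod (map zeta As)" for a
    using eq size_rep(1)[OF that] by (simp add: eta_of_def)
  have "ord_continuous (map zeta As) (zeta B) (eta_of G)"
    if "ord_continuous (map zeta As) (zeta B) (eta_of F)"
    using continuous_betw_cong[OF that[unfolded ord_continuous_def] eta_eq]
    by (simp add: ord_continuous_def)
  then have "etas_continuous \<longrightarrow> ord_continuous (map zeta As) (zeta B) (eta_of G)"
    using F by (simp add: admissible_def)
  moreover have "\<forall>x\<in>carA. G x \<in> car B"
    using F eq by (simp add: admissible_def)
  moreover have "\<forall>x\<in>carA. \<forall>y\<in>carA. prod_le As x y \<longrightarrow> le B (G x) (G y)"
  proof (intro ballI impI)
    fix x y assume xy: "x \<in> carA" "y \<in> carA" "prod_le As x y"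
    then have "le B (F x) (F y)" using F unfolding admissible_def by blast
    then show "le B (G x) (G y)" using eq xy by simp
  qed
  moreover have "\<forall>x\<in>carA. le B (G x) (corec_step G x)"
  proof
    fix x assume x: "x \<in> carA"
    then have "le B (F x) (corec_step F x)" using F unfolding admissible_def by blast
    then show "le B (G x) (corec_step G x)" using eq corec_step_cong[OF eq x] x by simp
  qed
  moreover have "size_invariant G"
    unfolding size_invariant_def
  proof (intro ballI impI)
    fix x y assume xy: "x \<in> carA" "y \<in> carA" "sizes As x = sizes As y"
    then have "sz B (F x) = sz B (F y)" using F unfolding admissible_def size_invariant_def by blast
    then show "sz B (G x) = sz B (G y)" using eq xy by simp
  qed
  ultimately show ?thesis by (simp add: admissible_def)
qed

lemma admissible_corec_step:
  assumes F: "admissible F"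
  shows "admissible (corec_step F)"
proof -
  have car: "\<forall>x\<in>carA. F x \<in> car B" and inv: "size_invariant F"
    using F by (auto simp: admissible_def)
  have car': "\<forall>x\<in>carA. corec_step F x \<in> car B" using corec_step_car[OF car] by blast
  have "ord_continuous (map zeta As) (zeta B) (eta_of (corec_step F))" if cont: etas_continuous
  proof -
    have "ord_continuous (map zeta As) (zeta B) (eta_step (eta_of F))"
      using F cont by (intro eta_step_continuous) (auto simp: admissible_def)
    then show ?thesis
      unfolding ord_continuous_def using eta_of_corec_step[OF car inv] by (rule continuous_betw_cong)
  qed
  moreover have "le B (corec_step F x) (corec_step (corec_step F) x)" if "x \<in> carA" for x
    using F car' that by (intro corec_step_le_pointwise) (auto simp: admissible_def)
  ultimately show ?thesis
    using F car' corec_step_mono[OF car] size_invariant_corec_step[OF car inv]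
    unfolding admissible_def by blast
qed

lemma admissible_exists: "\<exists>F. admissible F"
proof -
  obtain b where b: "b \<in> car B" "\<And>y. y \<in> car B \<Longrightarrow> le B b y"
    using cpo_bot[OF sized_cpo_cpo[OF B_sized]] by blast
  have "eta_of (\<lambda>_. b) = (\<lambda>_. sz B b)" by (simp add: eta_of_def fun_eq_iff)
  then have "ord_continuous (map zeta As) (zeta B) (eta_of (\<lambda>_. b))"
    using ord_continuous_const sized_cpo_sz_le[OF B_sized b(1)] by simp
  then have "admissible (\<lambda>_. b)"
    using b corec_step_car[of "\<lambda>_. b"] partial_order_refl[OF B_po]
    unfolding admissible_def size_invariant_def by auto
  then show ?thesis by blast
qed

context
  fixes M :: "('a list \<Rightarrow> 'a) set" and L :: "'a list \<Rightarrow> 'a"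
  assumes M_nonempty: "M \<noteq> {}" and M_admissible: "\<And>F. F \<in> M \<Longrightarrow> admissible F"
    and M_chain: "\<And>F F'. F \<in> M \<Longrightarrow> F' \<in> M \<Longrightarrow>
                  (\<forall>x\<in>carA. le B (F x) (F' x)) \<or> (\<forall>x\<in>carA. le B (F' x) (F x))"
    and L_lub: "\<And>x. x \<in> carA \<Longrightarrow> is_lub (car B) (le B) ((\<lambda>F. F x) ` M) (L x)"
begin

lemma chain_car: "F \<in> M \<Longrightarrow> \<forall>x\<in>carA. F x \<in> car B"
  using M_admissible by (simp add: admissible_def)

lemma chain_lub_car: "\<forall>x\<in>carA. L x \<in> car B"
  using L_lub by (simp add: is_lub_def)

lemma chain_lub_upper: "F \<in> M \<Longrightarrow> x \<in> carA \<Longrightarrow> le B (F x) (L x)"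
  using L_lub by (simp add: is_lub_def)

lemma chain_lub_below:
  assumes x: "x \<in> carA" and v: "v \<in> car B"
    and w: "\<And>F. F \<in> M \<Longrightarrow> w F \<in> car B \<and> le B (F x) (w F) \<and> le B (w F) v"
  shows "le B (L x) v"
proof -
  have "le B (F x) v" if F: "F \<in> M" for F
    using w[OF F] partial_order_trans[OF B_po] chain_car[OF F] x v by blast
  then show ?thesis using L_lub[OF x] v by (simp add: is_lub_def)
qed

lemma chain_lub_mono:
  assumes xy: "x \<in> carA" "y \<in> carA" "prod_le As x y"
  shows "le B (L x) (L y)"
proof (rule chain_lub_below[where w = "\<lambda>F. F y", OF xy(1) chain_lub_car[rule_format, OF xy(2)]])
  fix F assume F: "F \<in> M"
  have "le B (F x) (F y)" using M_admissible[OF F] xy unfolding admissible_def by blast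
  then show "F y \<in> car B \<and> le B (F x) (F y) \<and> le B (F y) (L y)"
    using chain_car[OF F] chain_lub_upper[OF F xy(2)] xy(2) by blast
qed

lemma chain_lub_post:
  assumes x: "x \<in> carA"
  shows "le B (L x) (corec_step L x)"
proof (rule chain_lub_below[OF x corec_step_car[OF chain_lub_car x], where w = "\<lambda>F. corec_step F x"])
  fix F assume F: "F \<in> M"
  have "le B (F x) (corec_step F x)" using M_admissible[OF F] x unfolding admissible_def by blast
  moreover have "le B (corec_step F x) (corec_step L x)"
    using chain_lub_upper[OF F] by (intro corec_step_le_pointwise[OF chain_car[OF F] chain_lub_car _ x]) blast
  ultimately show "corec_step F x \<in> car B \<and> le B (F x) (corec_step F x) \<and> le B (corec_step F x) (corec_step L x)"
    using corec_step_car[OF chain_car[OF F] x] by blast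
qed

lemma chain_lub_sz:
  assumes x: "x \<in> carA"
  shows "is_lub (On (zeta B)) (\<le>) ((\<lambda>F. sz B (F x)) ` M) (sz B (L x))"
proof -
  have "is_lub (On (zeta B)) (\<le>) (sz B ` (\<lambda>F. F x) ` M) (sz B (L x))"
  proof (rule sized_cpo_sz_chain_lub[OF B_sized _ _ _ L_lub[OF x]])
    fix u v assume "u \<in> (\<lambda>F. F x) ` M" "v \<in> (\<lambda>F. F x) ` M"
    then obtain F F' where "F \<in> M" "F' \<in> M" "u = F x" "v = F' x" by blast
    then show "le B u v \<or> le B v u" using M_chain x by blast
  qed (use chain_car x M_nonempty in auto)
  then show ?thesis by (simp add: image_image)
qed

lemma chain_lub_size_invariant: "size_invariant L"
  unfolding size_invariant_def
proof (intro ballI impI)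
  fix x y assume xy: "x \<in> carA" "y \<in> carA" "sizes As x = sizes As y"
  have "(\<lambda>F. sz B (F x)) ` M = (\<lambda>F. sz B (F y)) ` M"
  proof (rule image_cong[OF refl])
    fix F assume "F \<in> M"
    then show "sz B (F x) = sz B (F y)"
      using M_admissible xy unfolding admissible_def size_invariant_def by blast
  qed
  then have "is_lub (On (zeta B)) (\<le>) ((\<lambda>F. sz B (F x)) ` M) (sz B (L y))"
    using chain_lub_sz[OF xy(2)] by simp
  then show "sz B (L x) = sz B (L y)" using is_lub_On_unique[OF chain_lub_sz[OF xy(1)]] by blast
qed

lemma chain_lub_eta_continuous:
  assumes etas_continuous
  shows "ord_continuous (map zeta As) (zeta B) (eta_of L)"
  unfolding ord_continuous_def
proof (rule continuous_betw_On_lub[OF M_nonempty])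
  show "continuous_betw (ord_prod (map zeta As)) (ord_prod_le (map zeta As)) (On (zeta B)) (\<le>) (eta_of F)"
    if "F \<in> M" for F
    using M_admissible[OF that] assms by (simp add: admissible_def ord_continuous_def)
  show "is_lub (On (zeta B)) (\<le>) ((\<lambda>F. eta_of F a) ` M) (eta_of L a)"
    if "a \<in> ord_prod (map zeta As)" for a
    using chain_lub_sz[OF size_rep(1)[OF that]] by (simp add: eta_of_def)
qed

lemma admissible_chain_lub: "admissible L"
  using chain_lub_car chain_lub_mono chain_lub_post chain_lub_size_invariant chain_lub_eta_continuous
  unfolding admissible_def by blast

end

lemma corec_step_fixpoint: "\<exists>F. admissible F \<and> (\<forall>x\<in>carA. corec_step F x = F x)"
proof -
  obtain F0 where "admissible F0" using admissible_exists by blast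
  then show ?thesis
  proof (rule cpo_pointwise_fixpoint[where Q = admissible, OF sized_cpo_cpo[OF B_sized], rotated -1])
    show "F x \<in> car B" "le B (F x) (corec_step F x)" if "admissible F" "x \<in> carA" for F x
      using that by (auto simp: admissible_def)
  qed (fact admissible_cong admissible_chain_lub admissible_corec_step)+
qed

lemma fixed_size_eq_zeta:
  assumes m: "0 < m" and le: "beta \<le> zeta B" and fixed: "eta_h (map zeta As @ replicate m beta) = beta"
  shows "beta = zeta B"
proof (rule ccontr)
  assume "beta \<noteq> zeta B"
  with le have "length (replicate m beta) = m \<and> (\<forall>i<m. replicate m beta ! i \<le> zeta B)
      \<and> (\<exists>i<m. replicate m beta ! i < zeta B)"
    using m by auto
  then have "Min (set (replicate m beta)) < eta_h (map zeta As @ replicate m beta)"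
    using eta_h_cond by blast
  then show False using m fixed by simp
qed

text \<open>All maximal tuples have the same sizes, so F has a constant size on them that is a fixpoint
  of \<open>\<beta> \<mapsto> eta_h (\<zeta>, \<beta>, ..., \<beta>)\<close>; for m = 0 regularity of hs is used instead.\<close>

lemma fixpoint_maximal:
  assumes F: "admissible F" "\<forall>x\<in>carA. corec_step F x = F x" and x: "x \<in> max_prod As"
  shows "maximal (car B) (le B) (F x)"
proof -
  have F_car: "\<forall>x\<in>carA. F x \<in> car B" and inv: "size_invariant F" using F(1) by (auto simp: admissible_def)
  have xA: "x \<in> carA" using x max_prod_subset_prod_car by blast
  define beta where "beta = eta_of F (map zeta As)"
  have sz_F: "sz B (F y) = beta" if y: "y \<in> max_prod As" for y
    using eta_of_sizes[OF inv subsetD[OF max_prod_subset_prod_car y]] sizes_max_prod[OF y]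
    by (simp add: beta_def)
  have "beta = sz B (corec_step F x)" using F(2) xA sz_F[OF x] by simp
  also have "\<dots> = eta_h (map zeta As @ map (\<lambda>i. sz B (F (g_ext i x))) [0..<m])"
    using sz_hs_append[OF xA] F_car g_ext_car[OF _ xA] sizes_max_prod[OF x]
    by (simp add: corec_step_def comp_def)
  also have "map (\<lambda>i. sz B (F (g_ext i x))) [0..<m] = replicate m beta"
    using sz_F g_ext_max_prod[OF _ x] g_type x by (auto intro!: nth_equalityI)
  finally have beta: "eta_h (map zeta As @ replicate m beta) = beta" ..
  show ?thesis
  proof (cases "m = 0")
    case True
    then have "x @ [] \<in> max_prod (As @ replicate m B)" using x by simp
    then have "maximal (car B) (le B) (hs (x @ []))"
      using hs_regular max_prod_maximal unfolding regular_def by blast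
    moreover have "corec_step F x = hs (x @ [])" unfolding corec_step_def using True by simp
    ultimately show ?thesis using F(2) xA by simp
  next
    case False
    have "beta \<le> zeta B" using sz_F[OF x] sized_cpo_sz_le[OF B_sized] F_car xA by metis
    then have "sz B (F x) = zeta B" using fixed_size_eq_zeta[OF _ _ beta] False sz_F[OF x] by simp
    then show ?thesis using sized_cpo_maximal_iff[OF B_sized] F_car xA by blast
  qed
qed

lemma fixpoint_eq_corec:
  assumes f_corec: "defined_by_corec (max_prod As) (max_set B) (\<lambda>xs ys. h (xs @ ys)) (map g [0..<m]) f"
    and F: "admissible F" "\<forall>x\<in>carA. corec_step F x = F x"
  shows "\<forall>x\<in>max_prod As. F x = f x"
proof -
  have "F x = h (x @ map (\<lambda>g. F (g x)) (map g [0..<m]))" if x: "x \<in> max_prod As" for x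
  proof -
    have xA: "x \<in> carA" using x max_prod_subset_prod_car by blast
    have args: "map (\<lambda>i. F (g_ext i x)) [0..<m] = map (\<lambda>g. F (g x)) (map g [0..<m])"
      unfolding map_map comp_def using g_ext_max_prod[OF _ x] by (intro map_cong) auto
    have "\<forall>i<m. maximal (car B) (le B) (F (g i x))"
      using fixpoint_maximal[OF F] g_type x by blast
    then have max: "x @ map (\<lambda>g. F (g x)) (map g [0..<m]) \<in> max_prod (As @ replicate m B)"
      using x by (intro append_max_prod) auto
    have "F x = corec_step F x" using F(2) xA by simp
    also have "\<dots> = hs (x @ map (\<lambda>g. F (g x)) (map g [0..<m]))" by (simp only: corec_step_def args)
    also have "\<dots> = h (x @ map (\<lambda>g. F (g x)) (map g [0..<m]))" using max by (rule hs_max_prod)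
    finally show ?thesis .
  qed
  moreover have "\<forall>x\<in>max_prod As. F x \<in> max_set B"
    using fixpoint_maximal[OF F] by (simp add: max_set_def)
  ultimately show ?thesis using f_corec unfolding defined_by_corec_def by blast
qed

theorem production_fun_corec:
  assumes f_corec: "defined_by_corec (max_prod As) (max_set B) (\<lambda>xs ys. h (xs @ ys)) (map g [0..<m]) f"
  shows "\<exists>eta_f. production_fun As B f eta_f \<and>
           (\<forall>a\<in>ord_prod (map zeta As). eta_f a = eta_step eta_f a) \<and>
           (etas_continuous \<longrightarrow> ord_continuous (map zeta As) (zeta B) eta_f)"
proof -
  obtain F where F: "admissible F" "\<forall>x\<in>carA. corec_step F x = F x"
    using corec_step_fixpoint by blast
  have F_car: "\<forall>x\<in>carA. F x \<in> car B" and inv: "size_invariant F" using F(1) by (auto simp: admissible_def)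
  have "maximal (car B) (le B) (F x)" if "maximal carA (prod_le As) x" for x
  proof -
    have "x \<in> max_prod As"
      using maximal_max_prod[OF _ that] sized_cpo_refl[OF As_nth_sized] by blast
    then show ?thesis by (rule fixpoint_maximal[OF F])
  qed
  moreover have "\<forall>x\<in>carA. \<forall>y\<in>carA. prod_le As x y \<longrightarrow> le B (F x) (F y)"
    using F(1) by (simp add: admissible_def)
  moreover have "\<forall>x\<in>carA. eta_of F (sizes As x) = sz B (F x)"
    using eta_of_sizes[OF inv] by blast
  ultimately have "sized_extension As B f (eta_of F) F"
    using F_car fixpoint_eq_corec[OF f_corec F] unfolding sized_extension_def regular_def by blast
  moreover have "eta_of F a = eta_step (eta_of F) a" if a: "a \<in> ord_prod (map zeta As)" for a
  proof -
    have "eta_of F a = eta_of (corec_step F) a"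
      using F(2) size_rep(1)[OF a] by (simp add: eta_of_def)
    also have "\<dots> = eta_step (eta_of F) a" by (rule eta_of_corec_step[OF F_car inv a])
    finally show ?thesis .
  qed
  moreover have "etas_continuous \<longrightarrow> ord_continuous (map zeta As) (zeta B) (eta_of F)"
    using F(1) by (simp add: admissible_def)
  ultimately show ?thesis unfolding production_fun_iff by blast
qed

end

theorem theorem4p13:
  fixes As :: "('a, 'o::wellorder) scpo list" and B :: "('a, 'o) scpo"
    and m :: nat and h :: "'a list \<Rightarrow> 'a" and g :: "nat \<Rightarrow> 'a list \<Rightarrow> 'a list"
    and eta_h :: "'o list \<Rightarrow> 'o" and eta_g :: "nat \<Rightarrow> nat \<Rightarrow> 'o list \<Rightarrow> 'o"
    and f :: "'a list \<Rightarrow> 'a"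
  assumes As_sized: "\<forall>D\<in>set As. sized_cpo D"
    and B_sized: "sized_cpo B"
    and h_type: "\<forall>xs\<in>max_prod (As @ replicate m B). h xs \<in> max_set B"
    and g_type: "\<forall>i<m. \<forall>xs\<in>max_prod As. g i xs \<in> max_prod As"
    and eta_h_prod: "production_fun (As @ replicate m B) B h eta_h"
    and eta_g_prod: "\<forall>i<m. \<forall>j<length As. production_fun As (As ! j) (\<lambda>xs. g i xs ! j) (eta_g i j)"
    and eta_h_cond: "\<forall>bs. length bs = m \<and> (\<forall>i<m. bs ! i \<le> zeta B) \<and> (\<exists>i<m. bs ! i < zeta B)
                      \<longrightarrow> Min (set bs) < eta_h (map zeta As @ bs)"
    and f_corec: "defined_by_corec (max_prod As) (max_set B) (\<lambda>xs ys. h (xs @ ys)) (map g [0..<m]) f"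
  shows "\<exists>eta_f. production_fun As B f eta_f \<and>
           (\<forall>as\<in>ord_prod (map zeta As).
              eta_f as = eta_h (as @ map (\<lambda>i. eta_f (map (\<lambda>j. eta_g i j as) [0..<length As])) [0..<m])) \<and>
           ((ord_continuous (map zeta As @ replicate m (zeta B)) (zeta B) eta_h \<and>
             (\<forall>i<m. \<forall>j<length As. ord_continuous (map zeta As) (zeta (As ! j)) (eta_g i j)))
            \<longrightarrow> ord_continuous (map zeta As) (zeta B) eta_f)"
proof -
  obtain hs where "sized_extension (As @ replicate m B) B h eta_h hs"
    using eta_h_prod production_fun_iff by blast
  moreover obtain gs where
    "\<forall>i<m. \<forall>j<length As. sized_extension As (As ! j) (\<lambda>xs. g i xs ! j) (eta_g i j) (gs i j)"
    using eta_g_prod unfolding production_fun_iff by metis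
  ultimately interpret corec_production As B m h g eta_h eta_g hs gs
    using As_sized B_sized g_type eta_h_cond by unfold_locales
  show ?thesis
    using production_fun_corec[OF f_corec] unfolding eta_step_def etas_continuous_def .
qed

end
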